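(* Let $\varphi:\mathcal A\to\mathcal A$ be a continuous multiplicative map (i.e. $\varphi(AB)=\varphi(A)\varphi(B)$ for all $A,B\in\mathcal A$, not assumed linear) such that $\varphi(S)=S$ and $\varphi(\alpha I)=\alpha I$ for every $\alpha\in\mathbb C$. Then $\varphi$ is the identity map on $\mathcal A$.
   Context: $S$ denotes the $n\times n$ nilpotent Jordan block with ones on the superdiagonal and zeros elsewhere. $\mathcal A=\{f(S): f\text{ a complex polynomial}\}$ is the algebra of $n\times n$ upper-triangular Toeplitz matrices, equipped with the operator norm (induced by the Euclidean norm on $\mathbb C^n$). *)

theory Defs
  imports "Jordan_Normal_Form.Jordan_Normal_Form"
begin

definition S_mat :: "nat \<Rightarrow> complex mat" where
  "S_mat n = jordan_block n 0"

definition mat_poly_eval :: "complex poly \<Rightarrow> complex mat \<Rightarrow> complex mat" where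
  "mat_poly_eval f A = mat (dim_row A) (dim_col A)
     (\<lambda>(i,j). \<Sum>k\<le>degree f. coeff f k * (A ^\<^sub>m k) $$ (i,j))"

definition toeplitz_alg :: "nat \<Rightarrow> complex mat set" where
  "toeplitz_alg n = {mat_poly_eval f (S_mat n) | f. True}"

definition vec_enorm :: "complex vec \<Rightarrow> real" where
  "vec_enorm x = sqrt (\<Sum>i<dim_vec x. (cmod (x $ i))\<^sup>2)"

definition op_norm :: "complex mat \<Rightarrow> real" where
  "op_norm A = (SUP x\<in>{x. x \<in> carrier_vec (dim_col A) \<and> vec_enorm x = 1}. vec_enorm (A *\<^sub>v x))"

definition continuous_on_alg :: "nat \<Rightarrow> (complex mat \<Rightarrow> complex mat) \<Rightarrow> bool" where
  "continuous_on_alg n \<phi> \<longleftrightarrow> (\<forall>A\<in>toeplitz_alg n. \<forall>e>0. \<exists>d>0. \<forall>B\<in>toeplitz_alg n.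
      op_norm (B - A) < d \<longrightarrow> op_norm (\<phi> B - \<phi> A) < e)"

end

theory Submission
  imports Defs "HOL-Computational_Algebra.Polynomial_FPS" "HOL-Analysis.L2_Norm"
begin

text \<open>
  Identify f(S) with the power series f modulo X^n. Then \<phi> induces a map \<psi> on power series
  that is multiplicative modulo X^n and fixes the constants and X; multiplying by X^(n-m) shows
  that \<psi> also respects congruence modulo X^m for every m \<le> n. Suppose \<psi> f \<equiv> f modulo X^j
  for all f, where 0 < j < n. Then D f = (\<psi> f)_j - f_j is a point derivation,
  D (f g) = f_0 D g + g_0 D f, which vanishes on the constants and on X, hence on every f with
  f_0 = 0. On series with f_0 = 1 it is a homomorphism into (\<complex>, +), and a downward induction
  on i shows that on series \<equiv> 1 modulo X^i it is determined by the additive function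
  c \<mapsto> D (1 + c X^i). Continuity kills that function: D (1/k + c X^i) = D (1 + c X^i) for all
  k > 0, while the left-hand side tends to D (c X^i) = 0.
\<close>

lemma fps_cutoff_mult:
  "fps_cutoff n (f * g) = fps_cutoff n (fps_cutoff n f * fps_cutoff n g)"
  by (simp add: fps_cutoff_eq_fps_cutoff_iff fps_cutoff_left_mult_nth fps_cutoff_right_mult_nth)

lemma fps_mult_nth_diff_if_eq_below:
  fixes f g p q :: "'a::comm_ring fps"
  assumes "0 < j"
    and "\<And>l. l < j \<Longrightarrow> fps_nth p l = fps_nth f l"
    and "\<And>l. l < j \<Longrightarrow> fps_nth q l = fps_nth g l"
  shows "fps_nth (p * q) j - fps_nth (f * g) j
    = fps_nth f 0 * (fps_nth q j - fps_nth g j) + fps_nth g 0 * (fps_nth p j - fps_nth f j)"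
proof -
  have "fps_nth p i * fps_nth q (j - i) - fps_nth f i * fps_nth g (j - i)
      = (if i = 0 then fps_nth f 0 * (fps_nth q j - fps_nth g j) else 0)
        + (if i = j then fps_nth g 0 * (fps_nth p j - fps_nth f j) else 0)"
    if "i \<le> j" for i
    using that assms by (auto simp: algebra_simps)
  then have "fps_nth (p * q) j - fps_nth (f * g) j
      = (\<Sum>i=0..j. (if i = 0 then fps_nth f 0 * (fps_nth q j - fps_nth g j) else 0)
          + (if i = j then fps_nth g 0 * (fps_nth p j - fps_nth f j) else 0))"
    by (simp add: fps_mult_nth sum_subtractf[symmetric])
  then show ?thesis
    by (simp add: sum.distrib)
qed

locale fps_point_derivation =
  fixes D :: "'a::real_normed_field fps \<Rightarrow> 'a" and j :: nat
  assumes leibniz: "D (f * g) = fps_nth f 0 * D g + fps_nth g 0 * D f"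
    and const: "D (fps_const c) = 0"
    and fps_X: "D fps_X = 0"
    and local: "fps_cutoff (Suc j) f = fps_cutoff (Suc j) g \<Longrightarrow> D f = D g"
    and tendsto_add_const: "(\<lambda>k. D (f + fps_const (1 / of_nat k))) \<longlonglongrightarrow> D f"
      \<comment> \<open>continuity is only needed along the perturbations f + 1/k\<close>
begin

lemma eq_0_if_nth_0_eq_0:
  assumes "fps_nth f 0 = 0"
  shows "D f = 0"
proof -
  have "f = fps_shift 1 f * fps_X"
    using assms by (intro fps_ext) auto
  then have "D f = D (fps_shift 1 f * fps_X)" by simp
  then show ?thesis by (simp add: leibniz fps_X)
qed

lemma const_mult: "D (fps_const c * f) = c * D f"
  by (simp add: leibniz const)

lemma mult_if_nth_0_eq_1:
  "fps_nth f 0 = 1 \<Longrightarrow> fps_nth g 0 = 1 \<Longrightarrow> D (f * g) = D f + D g"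
  by (simp add: leibniz)

context
  fixes i :: nat
  assumes i_pos: "0 < i"
    and vanishes_above: "\<And>g. fps_cutoff (Suc i) g = fps_cutoff (Suc i) 1 \<Longrightarrow> D g = 0"
begin

lemma add_one_plus_monomial_neg_nth_eq_0:
  assumes "fps_cutoff i f = fps_cutoff i 1"
  shows "D f + D (1 + fps_const (- fps_nth f i) * fps_X ^ i) = 0"
proof -
  let ?g = "1 + fps_const (- fps_nth f i) * fps_X ^ i"
  have "fps_nth f 0 = 1"
    using assms i_pos by (simp add: fps_cutoff_eq_fps_cutoff_iff)
  moreover have "f * ?g = f + fps_const (- fps_nth f i) * (fps_X ^ i * f)"
    by (simp add: algebra_simps)
  then have "fps_cutoff (Suc i) (f * ?g) = fps_cutoff (Suc i) 1"
    using assms i_pos \<open>fps_nth f 0 = 1\<close>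
    by (auto simp: fps_cutoff_eq_fps_cutoff_iff fps_X_power_mult_nth less_Suc_eq)
  ultimately show ?thesis
    using vanishes_above mult_if_nth_0_eq_1[of f ?g] i_pos by simp
qed

lemma eq_one_plus_monomial_nth:
  assumes "fps_cutoff i f = fps_cutoff i 1"
  shows "D f = D (1 + fps_const (fps_nth f i) * fps_X ^ i)"
proof -
  let ?e = "\<lambda>c. 1 + fps_const c * fps_X ^ i"
  have "fps_cutoff i (?e (fps_nth f i)) = fps_cutoff i 1"
    by (simp add: fps_cutoff_eq_fps_cutoff_iff)
  from add_one_plus_monomial_neg_nth_eq_0[OF this] have "D (?e (fps_nth f i)) + D (?e (- fps_nth f i)) = 0"
    using i_pos by simp
  with add_one_plus_monomial_neg_nth_eq_0[OF assms] show ?thesis by (simp add: add_eq_0_iff)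
qed

lemma one_plus_monomial_add:
  "D (1 + fps_const (c + c') * fps_X ^ i)
    = D (1 + fps_const c * fps_X ^ i) + D (1 + fps_const c' * fps_X ^ i)"
proof -
  let ?e = "\<lambda>c. 1 + fps_const c * fps_X ^ i"
  have "fps_cutoff i (?e c * ?e c') = fps_cutoff i 1"
    by (auto simp: fps_cutoff_eq_fps_cutoff_iff algebra_simps fps_X_power_mult_nth
        power_add[symmetric])
  moreover have "fps_nth (?e c * ?e c') i = c + c'"
    using i_pos by (simp add: algebra_simps fps_X_power_mult_nth power_add[symmetric])
  ultimately have "D (?e c * ?e c') = D (?e (c + c'))"
    using eq_one_plus_monomial_nth by metis
  then show ?thesis
    using i_pos by (simp add: mult_if_nth_0_eq_1)
qed

lemma one_plus_monomial_of_nat_mult: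
  "D (1 + fps_const (of_nat k * c) * fps_X ^ i) = of_nat k * D (1 + fps_const c * fps_X ^ i)"
proof (induction k)
  case 0
  show ?case using const[of 1] by simp
next
  case (Suc k)
  then show ?case using one_plus_monomial_add[of "of_nat k * c" c] by (simp add: algebra_simps)
qed

lemma eq_0_if_cutoff_eq_1:
  assumes "fps_cutoff i f = fps_cutoff i 1"
  shows "D f = 0"
proof -
  let ?e = "\<lambda>c. 1 + fps_const c * fps_X ^ i"
  have "D (?e c) = 0" for c
  proof -
    have "(\<lambda>k. D (fps_const c * fps_X ^ i + fps_const (1 / of_nat k))) \<longlonglongrightarrow> 0"
      using tendsto_add_const[of "fps_const c * fps_X ^ i"]
        eq_0_if_nth_0_eq_0[of "fps_const c * fps_X ^ i"] i_pos by simp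
    moreover have "D (fps_const c * fps_X ^ i + fps_const (1 / of_nat k)) = D (?e c)" if "0 < k" for k
    proof -
      have "fps_const c * fps_X ^ i + fps_const (1 / of_nat k)
          = fps_const (1 / of_nat k) + fps_const (1 / of_nat k) * fps_const (of_nat k * c) * fps_X ^ i"
        using that by (simp add: add.commute)
      also have "\<dots> = fps_const (1 / of_nat k) * ?e (of_nat k * c)"
        by (simp only: distrib_left mult_1_right mult.assoc)
      finally have "D (fps_const c * fps_X ^ i + fps_const (1 / of_nat k))
          = 1 / of_nat k * (of_nat k * D (?e c))"
        by (simp only: const_mult one_plus_monomial_of_nat_mult)
      then show ?thesis
        using that by simp
    qed
    then have "\<forall>\<^sub>F k in sequentially. D (fps_const c * fps_X ^ i + fps_const (1 / of_nat k)) = D (?e c)"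
      by (intro eventually_sequentiallyI[of 1]) simp
    ultimately have "(\<lambda>k. D (?e c)) \<longlonglongrightarrow> 0"
      by (rule Lim_transform_eventually)
    then show ?thesis by (simp add: LIMSEQ_const_iff)
  qed
  then show ?thesis using eq_one_plus_monomial_nth[OF assms] by simp
qed

end

lemma eq_0: "D f = 0"
proof -
  have "D g = 0" if "fps_cutoff i g = fps_cutoff i 1" "1 \<le> i" "i \<le> Suc j" for i g
    using that(3,2,1)
  proof (induction i arbitrary: g rule: inc_induct)
    case base
    then have "D g = D 1" by (intro local) simp
    then show ?case using const[of 1] by simp
  next
    case (step i)
    show ?case
      by (rule eq_0_if_cutoff_eq_1[of i]) (use step in auto)
  qed
  from this[of 1] have unit: "D g = 0" if "fps_nth g 0 = 1" for g
    using that by (simp add: fps_cutoff_eq_fps_cutoff_iff)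
  show ?thesis
  proof (cases "fps_nth f 0 = 0")
    case True
    then show ?thesis by (rule eq_0_if_nth_0_eq_0)
  next
    case False
    then have "f = fps_const (fps_nth f 0) * (fps_const (1 / fps_nth f 0) * f)"
      by (simp add: mult.assoc[symmetric])
    then have "D f = fps_nth f 0 * D (fps_const (1 / fps_nth f 0) * f)"
      by (metis const_mult)
    with False show ?thesis using unit by simp
  qed
qed

end

locale multiplicative_mod_fps_X_power =
  fixes n :: nat and \<psi> :: "'a::real_normed_field fps \<Rightarrow> 'a fps"
  assumes cutoff_cong: "fps_cutoff n f = fps_cutoff n g \<Longrightarrow> fps_cutoff n (\<psi> f) = fps_cutoff n (\<psi> g)"
    and mult: "fps_cutoff n (\<psi> (f * g)) = fps_cutoff n (\<psi> f * \<psi> g)"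
    and const: "fps_cutoff n (\<psi> (fps_const c)) = fps_cutoff n (fps_const c)"
    and fps_X: "fps_cutoff n (\<psi> fps_X) = fps_cutoff n fps_X"
    and tendsto_add_const:
      "l < n \<Longrightarrow> (\<lambda>k. fps_nth (\<psi> (f + fps_const (1 / of_nat k))) l) \<longlonglongrightarrow> fps_nth (\<psi> f) l"
begin

lemma mult_cutoff_left:
  assumes "fps_cutoff n (\<psi> f) = fps_cutoff n f"
  shows "fps_cutoff n (\<psi> (f * g)) = fps_cutoff n (f * \<psi> g)"
proof -
  have "fps_cutoff n (\<psi> (f * g)) = fps_cutoff n (fps_cutoff n (\<psi> f) * fps_cutoff n (\<psi> g))"
    by (simp only: mult fps_cutoff_mult[of n "\<psi> f"])
  also have "\<dots> = fps_cutoff n (f * \<psi> g)"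
    by (simp only: assms fps_cutoff_mult[of n f, symmetric])
  finally show ?thesis .
qed

lemma fps_X_power: "fps_cutoff n (\<psi> (fps_X ^ k)) = fps_cutoff n (fps_X ^ k)"
proof (induction k)
  case 0
  show ?case using const[of 1] by simp
next
  case (Suc k)
  have "fps_cutoff n (\<psi> (fps_X * fps_X ^ k)) = fps_cutoff n (fps_X * \<psi> (fps_X ^ k))"
    using fps_X by (rule mult_cutoff_left)
  also have "\<dots> = fps_cutoff n (fps_X * fps_X ^ k)"
    by (metis Suc.IH fps_cutoff_mult mult.commute)
  finally show ?case by simp
qed

lemma fps_X_power_mult: "fps_cutoff n (\<psi> (fps_X ^ k * f)) = fps_cutoff n (fps_X ^ k * \<psi> f)"
  using fps_X_power by (rule mult_cutoff_left)

lemma cutoff_cong_le: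
  assumes "m \<le> n" and "fps_cutoff m f = fps_cutoff m g"
  shows "fps_cutoff m (\<psi> f) = fps_cutoff m (\<psi> g)"
proof -
  let ?s = "n - m"
  have "fps_cutoff n (fps_X ^ ?s * f) = fps_cutoff n (fps_X ^ ?s * g)"
    using assms by (auto simp: fps_cutoff_eq_fps_cutoff_iff fps_X_power_mult_nth)
  then have shifted: "fps_cutoff n (fps_X ^ ?s * \<psi> f) = fps_cutoff n (fps_X ^ ?s * \<psi> g)"
    using cutoff_cong fps_X_power_mult by metis
  have "fps_nth (\<psi> f) l = fps_nth (\<psi> g) l" if "l < m" for l
  proof -
    have "fps_nth (fps_X ^ ?s * \<psi> f) (l + ?s) = fps_nth (fps_X ^ ?s * \<psi> g) (l + ?s)"
      using shifted that assms(1) by (simp add: fps_cutoff_eq_fps_cutoff_iff)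
    then show ?thesis by (simp add: fps_X_power_mult_nth)
  qed
  then show ?thesis by (simp add: fps_cutoff_eq_fps_cutoff_iff)
qed

lemma nth_0_eq:
  assumes "0 < n"
  shows "fps_nth (\<psi> f) 0 = fps_nth f 0"
proof -
  have "fps_cutoff 1 (\<psi> f) = fps_cutoff 1 (\<psi> (fps_const (fps_nth f 0)))"
    using assms by (intro cutoff_cong_le) (auto simp: fps_cutoff_eq_fps_cutoff_iff)
  moreover have "fps_nth (\<psi> (fps_const (fps_nth f 0))) 0 = fps_nth f 0"
    using const[of "fps_nth f 0"] assms by (simp add: fps_cutoff_eq_fps_cutoff_iff)
  ultimately show ?thesis by (simp add: fps_cutoff_eq_fps_cutoff_iff)
qed

lemma nth_if_nth_below:
  assumes "0 < j" "j < n" and below: "\<And>f l. l < j \<Longrightarrow> fps_nth (\<psi> f) l = fps_nth f l"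
  shows "fps_nth (\<psi> f) j = fps_nth f j"
proof -
  interpret fps_point_derivation "\<lambda>f. fps_nth (\<psi> f) j - fps_nth f j" j
  proof
    fix f g :: "'a fps"
    have "fps_nth (\<psi> (f * g)) j = fps_nth (\<psi> f * \<psi> g) j"
      using mult[of f g] \<open>j < n\<close> by (simp add: fps_cutoff_eq_fps_cutoff_iff)
    then show "fps_nth (\<psi> (f * g)) j - fps_nth (f * g) j
        = fps_nth f 0 * (fps_nth (\<psi> g) j - fps_nth g j)
          + fps_nth g 0 * (fps_nth (\<psi> f) j - fps_nth f j)"
      using fps_mult_nth_diff_if_eq_below[OF \<open>0 < j\<close> below below] by simp
  next
    fix c
    show "fps_nth (\<psi> (fps_const c)) j - fps_nth (fps_const c) j = 0"
      using const[of c] \<open>j < n\<close> by (simp add: fps_cutoff_eq_fps_cutoff_iff)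
  next
    show "fps_nth (\<psi> fps_X) j - fps_nth fps_X j = 0"
      using fps_X \<open>j < n\<close> by (simp add: fps_cutoff_eq_fps_cutoff_iff)
  next
    fix f g :: "'a fps"
    assume "fps_cutoff (Suc j) f = fps_cutoff (Suc j) g"
    moreover from this have "fps_cutoff (Suc j) (\<psi> f) = fps_cutoff (Suc j) (\<psi> g)"
      using \<open>j < n\<close> by (intro cutoff_cong_le) auto
    ultimately show "fps_nth (\<psi> f) j - fps_nth f j = fps_nth (\<psi> g) j - fps_nth g j"
      by (simp add: fps_cutoff_eq_fps_cutoff_iff)
  next
    fix f :: "'a fps"
    show "(\<lambda>k. fps_nth (\<psi> (f + fps_const (1 / of_nat k))) j
          - fps_nth (f + fps_const (1 / of_nat k)) j) \<longlonglongrightarrow> fps_nth (\<psi> f) j - fps_nth f j"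
      using tendsto_add_const[OF \<open>j < n\<close>] \<open>0 < j\<close> by (simp add: tendsto_diff)
  qed
  show ?thesis using eq_0[of f] by simp
qed

lemma nth_eq: "l < n \<Longrightarrow> fps_nth (\<psi> f) l = fps_nth f l"
proof (induction l arbitrary: f rule: less_induct)
  case (less l)
  show ?case
  proof (cases "l = 0")
    case True
    then show ?thesis using nth_0_eq less.prems by simp
  next
    case False
    then show ?thesis using less by (auto intro: nth_if_nth_below)
  qed
qed

end

definition toeplitz_mat :: "nat \<Rightarrow> 'a::comm_ring_1 fps \<Rightarrow> 'a mat" where
  "toeplitz_mat n f = mat n n (\<lambda>(i, j). if i \<le> j then fps_nth f (j - i) else 0)"

lemma toeplitz_mat_carrier [simp]:
  "toeplitz_mat n f \<in> carrier_mat n n" "dim_row (toeplitz_mat n f) = n" "dim_col (toeplitz_mat n f) = n"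
  by (auto simp: toeplitz_mat_def)

lemma index_toeplitz_mat [simp]:
  "i < n \<Longrightarrow> j < n \<Longrightarrow> toeplitz_mat n f $$ (i, j) = (if i \<le> j then fps_nth f (j - i) else 0)"
  by (simp add: toeplitz_mat_def)

lemma toeplitz_mat_eq_iff: "toeplitz_mat n f = toeplitz_mat n g \<longleftrightarrow> fps_cutoff n f = fps_cutoff n g"
proof
  assume eq: "toeplitz_mat n f = toeplitz_mat n g"
  have "fps_nth f l = fps_nth g l" if "l < n" for l
    using arg_cong[where f="\<lambda>A. A $$ (0, l)", OF eq] that by simp
  then show "fps_cutoff n f = fps_cutoff n g"
    by (simp add: fps_cutoff_eq_fps_cutoff_iff)
next
  assume "fps_cutoff n f = fps_cutoff n g"
  then show "toeplitz_mat n f = toeplitz_mat n g"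
    by (intro eq_matI) (auto simp: fps_cutoff_eq_fps_cutoff_iff)
qed

lemma toeplitz_mat_mult: "toeplitz_mat n f * toeplitz_mat n g = toeplitz_mat n (f * g)"
proof (rule eq_matI)
  fix i j assume "i < dim_row (toeplitz_mat n (f * g))" "j < dim_col (toeplitz_mat n (f * g))"
  then have i: "i < n" and j: "j < n" by auto
  have "(toeplitz_mat n f * toeplitz_mat n g) $$ (i, j)
      = (\<Sum>m\<in>{0..<n}. (if i \<le> m then fps_nth f (m - i) else 0) * (if m \<le> j then fps_nth g (j - m) else 0))"
    using i j by (simp add: scalar_prod_def)
  also have "\<dots> = (if i \<le> j then fps_nth (f * g) (j - i) else 0)"
  proof (cases "i \<le> j")
    case True
    have "(\<Sum>m\<in>{0..<n}. (if i \<le> m then fps_nth f (m - i) else 0) * (if m \<le> j then fps_nth g (j - m) else 0))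
        = (\<Sum>m\<in>{i..j}. fps_nth f (m - i) * fps_nth g (j - m))"
      by (rule sum.mono_neutral_cong_right) (use j in auto)
    also have "\<dots> = (\<Sum>k=0..j - i. fps_nth f k * fps_nth g (j - i - k))"
      by (rule sum.reindex_bij_witness[where i="\<lambda>k. k + i" and j="\<lambda>m. m - i"]) (use True in auto)
    finally show ?thesis using True by (simp add: fps_mult_nth)
  qed (auto intro: sum.neutral)
  finally show "(toeplitz_mat n f * toeplitz_mat n g) $$ (i, j) = toeplitz_mat n (f * g) $$ (i, j)"
    using i j by simp
qed auto

lemma toeplitz_mat_fps_const: "toeplitz_mat n (fps_const c) = c \<cdot>\<^sub>m 1\<^sub>m n"
  by (rule eq_matI) auto

lemma toeplitz_mat_one: "toeplitz_mat n 1 = 1\<^sub>m n"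
  by (rule eq_matI) auto

lemma S_mat_eq_toeplitz_mat: "S_mat n = toeplitz_mat n fps_X"
  unfolding S_mat_def by (rule eq_matI) (auto simp: fps_X_nth)

lemma toeplitz_mat_power: "toeplitz_mat n f ^\<^sub>m k = toeplitz_mat n (f ^ k)"
  by (induction k) (simp_all add: toeplitz_mat_one toeplitz_mat_mult mult.commute)

lemma mat_poly_eval_S_mat: "mat_poly_eval p (S_mat n) = toeplitz_mat n (fps_of_poly p)"
proof (rule eq_matI)
  fix i j assume "i < dim_row (toeplitz_mat n (fps_of_poly p))" "j < dim_col (toeplitz_mat n (fps_of_poly p))"
  then have i: "i < n" and j: "j < n" by auto
  have "mat_poly_eval p (S_mat n) $$ (i, j) = (\<Sum>k\<le>degree p. coeff p k * toeplitz_mat n (fps_X ^ k) $$ (i, j))"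
    using i j by (simp add: mat_poly_eval_def S_mat_eq_toeplitz_mat toeplitz_mat_power)
  also have "\<dots> = (\<Sum>k\<le>degree p. if i \<le> j \<and> k = j - i then coeff p k else 0)"
    using i j by (intro sum.cong) auto
  also have "\<dots> = (if i \<le> j then coeff p (j - i) else 0)"
    by (auto simp: coeff_eq_0)
  finally show "mat_poly_eval p (S_mat n) $$ (i, j) = toeplitz_mat n (fps_of_poly p) $$ (i, j)"
    using i j by simp
qed (auto simp: mat_poly_eval_def S_mat_eq_toeplitz_mat)

lemma toeplitz_alg_eq_range: "toeplitz_alg n = range (toeplitz_mat n)"
proof -
  have "toeplitz_mat n f = toeplitz_mat n (fps_of_poly (Poly (map (fps_nth f) [0..<n])))" for f
    by (simp add: toeplitz_mat_eq_iff fps_cutoff_eq_fps_cutoff_iff nth_default_def)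
  then show ?thesis
    unfolding toeplitz_alg_def mat_poly_eval_S_mat by auto
qed

lemma toeplitz_alg_carrier: "A \<in> toeplitz_alg n \<Longrightarrow> A \<in> carrier_mat n n"
  by (auto simp: toeplitz_alg_eq_range)

lemma toeplitz_mat_add_const_diff: "toeplitz_mat n (f + fps_const c) - toeplitz_mat n f = c \<cdot>\<^sub>m 1\<^sub>m n"
  by (rule eq_matI) auto

lemma vec_enorm_eq_L2_set: "vec_enorm x = L2_set (\<lambda>i. cmod (x $ i)) {..<dim_vec x}"
  by (simp add: vec_enorm_def L2_set_def)

lemma norm_le_vec_enorm: "i < dim_vec x \<Longrightarrow> cmod (x $ i) \<le> vec_enorm x"
  unfolding vec_enorm_eq_L2_set by (rule member_le_L2_set) auto

lemma vec_enorm_unit_vec: "i < n \<Longrightarrow> vec_enorm (unit_vec n i :: complex vec) = 1"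
  unfolding vec_enorm_def by (simp add: unit_vec_def if_distrib[of "\<lambda>x. (cmod x)\<^sup>2"] cong: if_cong)

lemma vec_enorm_mult_mat_vec_le:
  assumes A: "A \<in> carrier_mat n n" and x: "x \<in> carrier_vec n" "vec_enorm x = 1"
  shows "vec_enorm (A *\<^sub>v x) \<le> (\<Sum>i<n. \<Sum>j<n. cmod (A $$ (i, j)))"
proof -
  have "cmod ((A *\<^sub>v x) $ i) \<le> (\<Sum>j<n. cmod (A $$ (i, j)))" if "i < n" for i
  proof -
    have "cmod ((A *\<^sub>v x) $ i) = cmod (\<Sum>j<n. A $$ (i, j) * x $ j)"
      using that A x by (simp add: scalar_prod_def atLeast0LessThan)
    also have "\<dots> \<le> (\<Sum>j<n. cmod (A $$ (i, j)) * cmod (x $ j))"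
      by (rule order_trans[OF norm_sum]) (simp add: norm_mult)
    also have "\<dots> \<le> (\<Sum>j<n. cmod (A $$ (i, j)))"
      using norm_le_vec_enorm[of _ x] x by (intro sum_mono mult_left_le) auto
    finally show ?thesis .
  qed
  then have "(\<Sum>i<n. cmod ((A *\<^sub>v x) $ i)) \<le> (\<Sum>i<n. \<Sum>j<n. cmod (A $$ (i, j)))"
    by (intro sum_mono) auto
  moreover have "vec_enorm (A *\<^sub>v x) \<le> (\<Sum>i<n. cmod ((A *\<^sub>v x) $ i))"
    using L2_set_le_sum_abs[of "\<lambda>i. cmod ((A *\<^sub>v x) $ i)" "{..<n}"] A
    by (simp add: vec_enorm_eq_L2_set)
  ultimately show ?thesis by linarith
qed

lemma unit_vec_mem_unit_sphere:
  "i < n \<Longrightarrow> unit_vec n i \<in> {x. x \<in> carrier_vec n \<and> vec_enorm x = 1}"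
  by (simp add: vec_enorm_unit_vec)

lemma op_norm_le_sum_norm:
  assumes A: "A \<in> carrier_mat n n" and "0 < n"
  shows "op_norm A \<le> (\<Sum>i<n. \<Sum>j<n. cmod (A $$ (i, j)))"
  unfolding op_norm_def
proof (rule cSUP_least)
  show "{x. x \<in> carrier_vec (dim_col A) \<and> vec_enorm x = 1} \<noteq> {}"
    using A unit_vec_mem_unit_sphere[OF \<open>0 < n\<close>] by (metis carrier_matD(2) empty_iff)
qed (use A vec_enorm_mult_mat_vec_le in auto)

lemma norm_index_le_op_norm:
  assumes A: "A \<in> carrier_mat n n" and "i < n" "j < n"
  shows "cmod (A $$ (i, j)) \<le> op_norm A"
  unfolding op_norm_def
proof (rule cSUP_upper2)
  show "bdd_above ((\<lambda>x. vec_enorm (A *\<^sub>v x)) ` {x. x \<in> carrier_vec (dim_col A) \<and> vec_enorm x = 1})"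
    using vec_enorm_mult_mat_vec_le[OF A] A by (intro bdd_aboveI) auto
  show "unit_vec n j \<in> {x. x \<in> carrier_vec (dim_col A) \<and> vec_enorm x = 1}"
    using A unit_vec_mem_unit_sphere[OF \<open>j < n\<close>] by simp
  have "(A *\<^sub>v unit_vec n j) $ i = A $$ (i, j)"
    using A assms by simp
  then show "cmod (A $$ (i, j)) \<le> vec_enorm (A *\<^sub>v unit_vec n j)"
    using norm_le_vec_enorm[of i "A *\<^sub>v unit_vec n j"] A \<open>i < n\<close> by simp
qed

lemma op_norm_smult_one_mat_tendsto_0:
  assumes "0 < n"
  shows "(\<lambda>k. op_norm ((1 / of_nat k) \<cdot>\<^sub>m 1\<^sub>m n)) \<longlonglongrightarrow> 0"
proof (rule tendsto_sandwich)
  have "0 \<le> op_norm (c \<cdot>\<^sub>m 1\<^sub>m n)" for c :: complex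
    using norm_index_le_op_norm[of "c \<cdot>\<^sub>m 1\<^sub>m n" n 0 0] assms
    by (simp add: order_trans[OF norm_ge_zero])
  then show "\<forall>\<^sub>F k in sequentially. 0 \<le> op_norm ((1 / of_nat k) \<cdot>\<^sub>m 1\<^sub>m n)"
    by simp
  have bound: "op_norm (c \<cdot>\<^sub>m 1\<^sub>m n) \<le> real n * cmod c" for c :: complex
  proof -
    have "(\<Sum>j<n. cmod ((c \<cdot>\<^sub>m 1\<^sub>m n) $$ (i, j))) = cmod c" if "i < n" for i
      using that by (simp add: if_distrib[of "\<lambda>x. cmod (c * x)"] cong: if_cong)
    then show ?thesis
      using op_norm_le_sum_norm[of "c \<cdot>\<^sub>m 1\<^sub>m n" n] assms by simp
  qed
  have "op_norm ((1 / of_nat k) \<cdot>\<^sub>m 1\<^sub>m n) \<le> real n * (1 / real k)" for k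
    using bound[of "1 / of_nat k"] by (simp add: norm_divide)
  then show "\<forall>\<^sub>F k in sequentially. op_norm ((1 / of_nat k) \<cdot>\<^sub>m 1\<^sub>m n) \<le> real n * (1 / real k)"
    by simp
  show "(\<lambda>k. real n * (1 / real k)) \<longlonglongrightarrow> 0"
    by (intro tendsto_mult_right_zero lim_1_over_n)
qed simp

lemma continuous_on_alg_imp_tendsto_index:
  assumes cont: "continuous_on_alg n \<phi>" and maps: "\<forall>A\<in>toeplitz_alg n. \<phi> A \<in> toeplitz_alg n"
    and A: "A \<in> toeplitz_alg n" and B: "\<And>k. B k \<in> toeplitz_alg n"
    and lim: "(\<lambda>k. op_norm (B k - A)) \<longlonglongrightarrow> 0" and "i < n" "j < n"
  shows "(\<lambda>k. \<phi> (B k) $$ (i, j)) \<longlonglongrightarrow> \<phi> A $$ (i, j)"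
proof (rule LIMSEQ_I)
  fix e :: real
  assume "0 < e"
  then obtain d where "0 < d"
    and d: "\<forall>B\<in>toeplitz_alg n. op_norm (B - A) < d \<longrightarrow> op_norm (\<phi> B - \<phi> A) < e"
    using cont A unfolding continuous_on_alg_def by blast
  obtain N where N: "\<And>k. N \<le> k \<Longrightarrow> norm (op_norm (B k - A) - 0) < d"
    using LIMSEQ_D[OF lim \<open>0 < d\<close>] by blast
  have "cmod (\<phi> (B k) $$ (i, j) - \<phi> A $$ (i, j)) < e" if "N \<le> k" for k
  proof -
    have carrier: "\<phi> (B k) \<in> carrier_mat n n" "\<phi> A \<in> carrier_mat n n"
      using maps A B toeplitz_alg_carrier by auto
    then have "cmod (\<phi> (B k) $$ (i, j) - \<phi> A $$ (i, j)) \<le> op_norm (\<phi> (B k) - \<phi> A)"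
      using norm_index_le_op_norm[of "\<phi> (B k) - \<phi> A" n i j] \<open>i < n\<close> \<open>j < n\<close>
      by (simp add: minus_carrier_mat)
    also have "\<dots> < e"
      using d B N[OF that] by auto
    finally show ?thesis .
  qed
  then show "\<exists>N. \<forall>k\<ge>N. norm (\<phi> (B k) $$ (i, j) - \<phi> A $$ (i, j)) < e"
    by blast
qed

definition induced_fps_map :: "nat \<Rightarrow> ('a mat \<Rightarrow> 'a mat) \<Rightarrow> 'a::comm_ring_1 fps \<Rightarrow> 'a fps" where
  "induced_fps_map n \<phi> f = Abs_fps (\<lambda>l. \<phi> (toeplitz_mat n f) $$ (0, l))"

lemma toeplitz_mat_induced_fps_map:
  assumes "\<forall>A\<in>toeplitz_alg n. \<phi> A \<in> toeplitz_alg n"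
  shows "\<phi> (toeplitz_mat n f) = toeplitz_mat n (induced_fps_map n \<phi> f)"
proof -
  obtain g where g: "\<phi> (toeplitz_mat n f) = toeplitz_mat n g"
    using assms by (auto simp: toeplitz_alg_eq_range)
  then have "toeplitz_mat n g = toeplitz_mat n (induced_fps_map n \<phi> f)"
    by (auto simp: toeplitz_mat_eq_iff fps_cutoff_eq_fps_cutoff_iff induced_fps_map_def)
  with g show ?thesis by simp
qed

lemma multiplicative_mod_fps_X_power_induced_fps_map:
  fixes \<phi> :: "complex mat \<Rightarrow> complex mat"
  assumes maps: "\<forall>A\<in>toeplitz_alg n. \<phi> A \<in> toeplitz_alg n"
    and cont: "continuous_on_alg n \<phi>"
    and mult: "\<forall>A\<in>toeplitz_alg n. \<forall>B\<in>toeplitz_alg n. \<phi> (A * B) = \<phi> A * \<phi> B"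
    and fixS: "\<phi> (S_mat n) = S_mat n"
    and scal: "\<forall>\<alpha>::complex. \<phi> (\<alpha> \<cdot>\<^sub>m 1\<^sub>m n) = \<alpha> \<cdot>\<^sub>m 1\<^sub>m n"
  shows "multiplicative_mod_fps_X_power n (induced_fps_map n \<phi>)"
proof
  let ?\<psi> = "induced_fps_map n \<phi>"
  have T: "\<phi> (toeplitz_mat n f) = toeplitz_mat n (?\<psi> f)" for f
    using maps by (rule toeplitz_mat_induced_fps_map)
  have alg: "toeplitz_mat n f \<in> toeplitz_alg n" for f
    by (simp add: toeplitz_alg_eq_range)
  show "fps_cutoff n (?\<psi> f) = fps_cutoff n (?\<psi> g)" if "fps_cutoff n f = fps_cutoff n g" for f g
    using that T by (metis toeplitz_mat_eq_iff)
  show "fps_cutoff n (?\<psi> (f * g)) = fps_cutoff n (?\<psi> f * ?\<psi> g)" for f g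
  proof -
    have "toeplitz_mat n (?\<psi> (f * g)) = \<phi> (toeplitz_mat n f * toeplitz_mat n g)"
      by (simp add: T toeplitz_mat_mult)
    also have "\<dots> = \<phi> (toeplitz_mat n f) * \<phi> (toeplitz_mat n g)"
      using mult alg by blast
    also have "\<dots> = toeplitz_mat n (?\<psi> f * ?\<psi> g)"
      by (simp add: T toeplitz_mat_mult)
    finally show ?thesis by (simp add: toeplitz_mat_eq_iff)
  qed
  show "fps_cutoff n (?\<psi> (fps_const c)) = fps_cutoff n (fps_const c)" for c
    using T[of "fps_const c"] scal by (simp add: toeplitz_mat_fps_const toeplitz_mat_eq_iff[symmetric])
  show "fps_cutoff n (?\<psi> fps_X) = fps_cutoff n fps_X"
    using T[of fps_X] fixS by (simp add: S_mat_eq_toeplitz_mat toeplitz_mat_eq_iff[symmetric])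
  show "(\<lambda>k. fps_nth (?\<psi> (f + fps_const (1 / of_nat k))) l) \<longlonglongrightarrow> fps_nth (?\<psi> f) l"
    if "l < n" for f l
    using continuous_on_alg_imp_tendsto_index[OF cont maps alg alg _ _ that]
      op_norm_smult_one_mat_tendsto_0 that
    by (simp add: induced_fps_map_def toeplitz_mat_add_const_diff)
qed

theorem lemma2p3:
  fixes n :: nat and \<phi> :: "complex mat \<Rightarrow> complex mat"
  assumes maps: "\<forall>A\<in>toeplitz_alg n. \<phi> A \<in> toeplitz_alg n"
    and cont: "continuous_on_alg n \<phi>"
    and mult: "\<forall>A\<in>toeplitz_alg n. \<forall>B\<in>toeplitz_alg n. \<phi> (A * B) = \<phi> A * \<phi> B"
    and fixS: "\<phi> (S_mat n) = S_mat n"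
    and scal: "\<forall>\<alpha>::complex. \<phi> (\<alpha> \<cdot>\<^sub>m 1\<^sub>m n) = \<alpha> \<cdot>\<^sub>m 1\<^sub>m n"
  shows "\<forall>A\<in>toeplitz_alg n. \<phi> A = A"
proof
  fix A
  assume "A \<in> toeplitz_alg n"
  then obtain f where A: "A = toeplitz_mat n f"
    by (auto simp: toeplitz_alg_eq_range)
  interpret multiplicative_mod_fps_X_power n "induced_fps_map n \<phi>"
    using assms by (rule multiplicative_mod_fps_X_power_induced_fps_map)
  have "fps_cutoff n (induced_fps_map n \<phi> f) = fps_cutoff n f"
    by (simp add: fps_cutoff_eq_fps_cutoff_iff nth_eq)
  then show "\<phi> A = A"
    unfolding A toeplitz_mat_induced_fps_map[OF maps] by (simp add: toeplitz_mat_eq_iff)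
qed

end
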